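(* Let $R$ be a ring, $M$ an $R$-module and $\theta$ an infinite cardinal. Then $\mathrm{Aff}_2\subseteq\mathrm{Aff}_1$.
   Context: All formulas are from $\mathscr{L}_{\infty,\theta}(\tau_M)$ with fewer than $\theta$ free variables. For $\varphi(\bar x,\bar y)$ and $\bar a\in{}^{\lg(\bar y)}M$, $\varphi(M,\bar a)=\{\bar c: M\models\varphi[\bar c,\bar a]\}$. $\mathrm{Aff}_1$ is the set of formulas $\varphi(\bar x)$ with $\lg(\bar x)<\theta$ such that $\varphi(M)$ is closed under $(\bar a,\bar b,\bar c)\mapsto\bar a-\bar b+\bar c$ (coordinatewise). For an ordinal $\alpha_*$, formulas $\varphi(\bar x,\bar y)$ and $\bar\psi=\langle\psi_\alpha(\bar x,\bar y):\alpha<\alpha_*\rangle$, and $\bar b\in{}^{\lg\bar x}M$, $\bar a\in{}^{\lg\bar y}M$, let $\mathrm{set}_{\bar\psi}(\bar b,\bar a)=\{\alpha<\alpha_*:\bar b^\frown\bar a\in\psi_\alpha(M)\}$; $\mathrm{Set}_{\varphi,\bar\psi}(\bar a)=\{\mathrm{set}_{\bar\psi}(\bar c,\bar a):\bar c\in\varphi(M,\bar a)\}$; and $\mathrm{inter}_{\varphi,\bar\psi}(\bar a)$ is the set of pairs $(w_0,w_1)$ with $w_0\subseteq w_1\subseteq\alpha_*$ such that there are $u_0,u_1\in\mathrm{Set}_{\varphi,\bar\psi}(\bar a)$ with $w_1\subseteq u_1$ and $u_0\cap w_1=w_0$. $\mathrm{Aff}_2$ is the smallest class of formulas containing the atomic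 formulas and closed under: (a) arbitrary conjunctions; (b) existential quantification $\exists\bar x$; (c) if $\varphi(\bar x,\bar y)$ and $\psi_\alpha(\bar x,\bar y)$ ($\alpha<\alpha_*$) are in $\mathrm{Aff}_2$ with $\psi_\alpha(M)\subseteq\varphi(M)$ for all $\alpha<\alpha_*$, and $\Upsilon\subseteq\{(w_0,w_1):w_0\subseteq w_1\subseteq\alpha_*\}$, then the formula $\vartheta(\bar y)=\Theta_{\varphi,\bar\psi,\Upsilon}(\bar y)$ is in $\mathrm{Aff}_2$, where $M\models\vartheta[\bar a]$ iff $\Upsilon\subseteq\mathrm{inter}_{\varphi,\bar\psi}(\bar a)$. *)

theory Defs
  imports Main
begin

definition left_module :: "('r::ring_1 \<Rightarrow> 'm::ab_group_add \<Rightarrow> 'm) \<Rightarrow> bool" where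
  "left_module sc \<longleftrightarrow>
     (\<forall>r x y. sc r (x + y) = sc r x + sc r y) \<and>
     (\<forall>r s x. sc (r + s) x = sc r x + sc s x) \<and>
     (\<forall>r s x. sc (r * s) x = sc r (sc s x)) \<and>
     (\<forall>x. sc 1 x = x)"

text \<open>Cardinal comparison: |X| < theta, where theta = |Th|.\<close>
definition less_card :: "'v set \<Rightarrow> 'c set \<Rightarrow> bool" where
  "less_card X Th \<longleftrightarrow> (card_of X, card_of Th) \<in> ordLess"

datatype ('v, 'r) tm = Var 'v | Zero | Add "('v, 'r) tm" "('v, 'r) tm"
  | Neg "('v, 'r) tm" | Sc 'r "('v, 'r) tm"

fun teval :: "('r \<Rightarrow> 'm::ab_group_add \<Rightarrow> 'm) \<Rightarrow> ('v \<Rightarrow> 'm) \<Rightarrow> ('v, 'r) tm \<Rightarrow> 'm" where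
  "teval sc v (Var i) = v i"
| "teval sc v Zero = 0"
| "teval sc v (Add s t) = teval sc v s + teval sc v t"
| "teval sc v (Neg t) = - teval sc v t"
| "teval sc v (Sc r t) = sc r (teval sc v t)"

text \<open>Formulas are represented semantically by the set of assignments (variables 'v to M)
  satisfying them.  A formula "has its free variables among Y" is rendered as
  the satisfaction set depending only on the variables in Y.\<close>
definition depends_on :: "('v \<Rightarrow> 'm) set \<Rightarrow> 'v set \<Rightarrow> bool" where
  "depends_on S Y \<longleftrightarrow> (\<forall>v w. (\<forall>i\<in>Y. v i = w i) \<longrightarrow> (v \<in> S \<longleftrightarrow> w \<in> S))"

definition ex_vars :: "'v set \<Rightarrow> ('v \<Rightarrow> 'm) set \<Rightarrow> ('v \<Rightarrow> 'm) set" where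
  "ex_vars X S = {v. \<exists>w\<in>S. \<forall>i. i \<notin> X \<longrightarrow> w i = v i}"

definition set_psi :: "('k \<Rightarrow> ('v \<Rightarrow> 'm) set) \<Rightarrow> 'k set \<Rightarrow> ('v \<Rightarrow> 'm) \<Rightarrow> 'k set" where
  "set_psi \<psi> I c = {\<alpha>\<in>I. c \<in> \<psi> \<alpha>}"

text \<open>Set_{phi,psi}(a): the x-variables are X; the assignment v gives the parameters a.\<close>
definition Set_phi_psi :: "('v \<Rightarrow> 'm) set \<Rightarrow> ('k \<Rightarrow> ('v \<Rightarrow> 'm) set) \<Rightarrow> 'k set \<Rightarrow> 'v set
    \<Rightarrow> ('v \<Rightarrow> 'm) \<Rightarrow> 'k set set" where
  "Set_phi_psi \<phi> \<psi> I X v = {set_psi \<psi> I c | c. c \<in> \<phi> \<and> (\<forall>i. i \<notin> X \<longrightarrow> c i = v i)}"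

definition inter_phi_psi :: "('v \<Rightarrow> 'm) set \<Rightarrow> ('k \<Rightarrow> ('v \<Rightarrow> 'm) set) \<Rightarrow> 'k set \<Rightarrow> 'v set
    \<Rightarrow> ('v \<Rightarrow> 'm) \<Rightarrow> ('k set \<times> 'k set) set" where
  "inter_phi_psi \<phi> \<psi> I X v = {(w0, w1). w0 \<subseteq> w1 \<and> w1 \<subseteq> I \<and>
      (\<exists>u0 \<in> Set_phi_psi \<phi> \<psi> I X v. \<exists>u1 \<in> Set_phi_psi \<phi> \<psi> I X v. w1 \<subseteq> u1 \<and> u0 \<inter> w1 = w0)}"

definition Theta :: "('v \<Rightarrow> 'm) set \<Rightarrow> ('k \<Rightarrow> ('v \<Rightarrow> 'm) set) \<Rightarrow> 'k set \<Rightarrow> 'v set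
    \<Rightarrow> ('k set \<times> 'k set) set \<Rightarrow> ('v \<Rightarrow> 'm) set" where
  "Theta \<phi> \<psi> I X Ups = {v. Ups \<subseteq> inter_phi_psi \<phi> \<psi> I X v}"

text \<open>Aff_2 (semantic rendering; the index sets of the families psi are subsets of the type 'k,
  which is universally quantified in the theorem).\<close>
inductive aff2 :: "'c set \<Rightarrow> ('r \<Rightarrow> 'm::ab_group_add \<Rightarrow> 'm) \<Rightarrow> 'k itself \<Rightarrow> ('v \<Rightarrow> 'm) set \<Rightarrow> bool"
  for Th :: "'c set" and sc :: "'r \<Rightarrow> 'm \<Rightarrow> 'm" and kt :: "'k itself" where
  atomic: "aff2 Th sc kt {v. teval sc v t1 = teval sc v t2}"
| conj: "\<lbrakk>\<forall>S\<in>F. aff2 Th sc kt S; less_card Y Th; \<forall>S\<in>F. depends_on S Y\<rbrakk>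
          \<Longrightarrow> aff2 Th sc kt (\<Inter>F)"
| ex: "\<lbrakk>aff2 Th sc kt S; less_card X Th\<rbrakk> \<Longrightarrow> aff2 Th sc kt (ex_vars X S)"
| theta: "\<lbrakk>aff2 Th sc kt \<phi>; \<forall>\<alpha>\<in>I. aff2 Th sc kt (\<psi> \<alpha>); \<forall>\<alpha>\<in>I. \<psi> \<alpha> \<subseteq> \<phi>;
           less_card X Th; less_card Y Th; X \<inter> Y = {};
           depends_on \<phi> (X \<union> Y); \<forall>\<alpha>\<in>I. depends_on (\<psi> \<alpha>) (X \<union> Y);
           Ups \<subseteq> {(w0, w1). w0 \<subseteq> w1 \<and> w1 \<subseteq> I}\<rbrakk>
          \<Longrightarrow> aff2 Th sc kt (Theta \<phi> (\<psi> :: 'k \<Rightarrow> ('v \<Rightarrow> 'm) set) I X Ups)"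

definition aff1 :: "'c set \<Rightarrow> ('v \<Rightarrow> 'm::ab_group_add) set \<Rightarrow> bool" where
  "aff1 Th S \<longleftrightarrow> (\<exists>Y. less_card Y Th \<and> depends_on S Y) \<and>
     (\<forall>a\<in>S. \<forall>b\<in>S. \<forall>c\<in>S. (\<lambda>i. a i - b i + c i) \<in> S)"

end

theory Submission
  imports Defs
begin

text \<open>Each formation rule of \<open>Aff\<^sub>2\<close> preserves the two properties required by \<open>Aff\<^sub>1\<close>.
  Atomic formulas are equations between terms, whose value is additive and commutes with
  scalars, so the map \<open>(a, b, c) \<mapsto> a - b + c\<close> passes through them; conjunctions and
  existential quantifiers preserve closure under it.  For \<open>\<Theta>\<close>, given witnesses
  \<open>(a\<^sub>0, a\<^sub>1), (b\<^sub>0, b\<^sub>1), (d\<^sub>0, d\<^sub>1)\<close> for a pair \<open>(w\<^sub>0, w\<^sub>1)\<close> at parameters \<open>a, b, d\<close>, the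
  assignments \<open>a\<^sub>1 - b\<^sub>1 + d\<^sub>1\<close> and \<open>a\<^sub>0 - b\<^sub>1 + d\<^sub>1\<close> witness it at \<open>a - b + d\<close>: on \<open>w\<^sub>1\<close> both
  \<open>b\<^sub>1\<close> and \<open>d\<^sub>1\<close> satisfy every \<open>\<psi>\<^sub>\<alpha>\<close>, and translating by \<open>d\<^sub>1 - b\<^sub>1\<close> is a bijection of each
  affinely closed \<open>\<psi>\<^sub>\<alpha>(M)\<close>.  The bound on the free variables is inherited from the
  parameters of each rule, and is finite for atomic formulas.\<close>

definition affine_closed :: "('v \<Rightarrow> 'm::ab_group_add) set \<Rightarrow> bool" where
  "affine_closed S \<longleftrightarrow> (\<forall>a\<in>S. \<forall>b\<in>S. \<forall>c\<in>S. (\<lambda>i. a i - b i + c i) \<in> S)"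

lemma aff1_iff_affine_closed:
  "aff1 Th S \<longleftrightarrow> (\<exists>Y. less_card Y Th \<and> depends_on S Y) \<and> affine_closed S"
  by (simp add: aff1_def affine_closed_def)

lemma finite_less_card:
  assumes "finite X" "infinite Th"
  shows "less_card X Th"
  unfolding less_card_def
  by (rule finite_ordLess_infinite) (simp_all add: card_of_well_order_on Field_card_of assms)

primrec tvars :: "('v, 'r) tm \<Rightarrow> 'v set" where
  "tvars (Var i) = {i}"
| "tvars Zero = {}"
| "tvars (Add s t) = tvars s \<union> tvars t"
| "tvars (Neg t) = tvars t"
| "tvars (Sc r t) = tvars t"

lemma finite_tvars: "finite (tvars t)"
  by (induction t) auto

lemma teval_cong: "(\<And>i. i \<in> tvars t \<Longrightarrow> v i = w i) \<Longrightarrow> teval sc v t = teval sc w t"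
  by (induction t) auto

lemma depends_on_teval_eq:
  "depends_on {v. teval sc v t1 = teval sc v t2} (tvars t1 \<union> tvars t2)"
  unfolding depends_on_def
proof (intro allI impI)
  fix v w :: "'a \<Rightarrow> 'b"
  assume "\<forall>i\<in>tvars t1 \<union> tvars t2. v i = w i"
  then have "teval sc v t1 = teval sc w t1" "teval sc v t2 = teval sc w t2"
    by (auto intro: teval_cong)
  then show "v \<in> {v. teval sc v t1 = teval sc v t2} \<longleftrightarrow> w \<in> {v. teval sc v t1 = teval sc v t2}"
    by simp
qed

lemma left_module_add: "left_module sc \<Longrightarrow> sc r (x + y) = sc r x + sc r y"
  unfolding left_module_def by blast

lemma left_module_diff:
  assumes "left_module sc"
  shows "sc r (x - y) = sc r x - sc r y"
  using left_module_add[OF assms, of r "x - y" y] by (simp add: algebra_simps)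

lemma teval_affine_comb:
  assumes "left_module sc"
  shows "teval sc (\<lambda>i. a i - b i + c i) t = teval sc a t - teval sc b t + teval sc c t"
  by (induction t)
    (simp_all only: teval.simps left_module_add[OF assms] left_module_diff[OF assms],
     simp_all add: algebra_simps)

lemma affine_closed_teval_eq:
  "left_module sc \<Longrightarrow> affine_closed {v. teval sc v t1 = teval sc v t2}"
  by (simp add: affine_closed_def teval_affine_comb)

lemma depends_on_Inter: "(\<And>S. S \<in> F \<Longrightarrow> depends_on S Y) \<Longrightarrow> depends_on (\<Inter>F) Y"
  unfolding depends_on_def by blast

lemma affine_closed_Inter: "(\<And>S. S \<in> F \<Longrightarrow> affine_closed S) \<Longrightarrow> affine_closed (\<Inter>F)"
  unfolding affine_closed_def by blast

lemma depends_on_ex_vars: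
  assumes "depends_on S Y"
  shows "depends_on (ex_vars X S) Y"
proof -
  have "v' \<in> ex_vars X S" if "v \<in> ex_vars X S" "\<forall>i\<in>Y. v i = v' i" for v v'
  proof -
    from that(1) obtain u where u: "u \<in> S" "\<forall>i. i \<notin> X \<longrightarrow> u i = v i"
      unfolding ex_vars_def by blast
    define u' where "u' = (\<lambda>i. if i \<in> X then u i else v' i)"
    have "\<forall>i\<in>Y. u i = u' i"
      using u(2) that(2) unfolding u'_def by auto
    then have "u' \<in> S"
      using assms u(1) unfolding depends_on_def by blast
    moreover have "\<forall>i. i \<notin> X \<longrightarrow> u' i = v' i"
      unfolding u'_def by simp
    ultimately show ?thesis
      unfolding ex_vars_def by blast
  qed
  then show ?thesis
    unfolding depends_on_def by (intro allI impI iffI) auto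
qed

lemma affine_closed_ex_vars:
  assumes "affine_closed S"
  shows "affine_closed (ex_vars X S)"
  unfolding affine_closed_def
proof (intro ballI)
  fix a b c
  assume "a \<in> ex_vars X S" "b \<in> ex_vars X S" "c \<in> ex_vars X S"
  then obtain a' b' c' where mem: "a' \<in> S" "b' \<in> S" "c' \<in> S"
    and agree: "\<forall>i. i \<notin> X \<longrightarrow> a' i = a i" "\<forall>i. i \<notin> X \<longrightarrow> b' i = b i"
      "\<forall>i. i \<notin> X \<longrightarrow> c' i = c i"
    unfolding ex_vars_def by blast
  have "(\<lambda>i. a' i - b' i + c' i) \<in> S"
    using assms mem unfolding affine_closed_def by blast
  moreover have "\<forall>i. i \<notin> X \<longrightarrow> a' i - b' i + c' i = a i - b i + c i"
    using agree by simp
  ultimately show "(\<lambda>i. a i - b i + c i) \<in> ex_vars X S"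
    unfolding ex_vars_def by (auto intro!: bexI[of _ "\<lambda>i. a' i - b' i + c' i"])
qed

lemma Set_phi_psi_cong:
  assumes "depends_on \<phi> (X \<union> Y)" "\<forall>\<alpha>\<in>I. depends_on (\<psi> \<alpha>) (X \<union> Y)"
    and "\<forall>i\<in>Y. v i = v' i"
  shows "Set_phi_psi \<phi> \<psi> I X v = Set_phi_psi \<phi> \<psi> I X v'"
proof -
  have "Set_phi_psi \<phi> \<psi> I X v \<subseteq> Set_phi_psi \<phi> \<psi> I X v'"
    if "\<forall>i\<in>Y. v i = v' i" for v v'
  proof
    fix s
    assume "s \<in> Set_phi_psi \<phi> \<psi> I X v"
    then obtain c where c: "s = set_psi \<psi> I c" "c \<in> \<phi>" "\<forall>i. i \<notin> X \<longrightarrow> c i = v i"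
      unfolding Set_phi_psi_def by blast
    define c' where "c' = (\<lambda>i. if i \<in> X then c i else v' i)"
    have agree: "\<forall>i\<in>X \<union> Y. c i = c' i"
      using c(3) that unfolding c'_def by auto
    then have "c' \<in> \<phi>"
      using assms(1) c(2) unfolding depends_on_def by blast
    moreover have "set_psi \<psi> I c' = s"
      using c(1) agree assms(2) unfolding set_psi_def depends_on_def by blast
    moreover have "\<forall>i. i \<notin> X \<longrightarrow> c' i = v' i"
      unfolding c'_def by simp
    ultimately show "s \<in> Set_phi_psi \<phi> \<psi> I X v'"
      unfolding Set_phi_psi_def by blast
  qed
  then show ?thesis
    using assms(3) by (metis subset_antisym)
qed

lemma depends_on_Theta:
  assumes "depends_on \<phi> (X \<union> Y)" "\<forall>\<alpha>\<in>I. depends_on (\<psi> \<alpha>) (X \<union> Y)"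
  shows "depends_on (Theta \<phi> \<psi> I X Ups) Y"
  unfolding depends_on_def
proof (intro allI impI)
  fix v w :: "'a \<Rightarrow> 'b"
  assume "\<forall>i\<in>Y. v i = w i"
  then have "Set_phi_psi \<phi> \<psi> I X v = Set_phi_psi \<phi> \<psi> I X w"
    by (rule Set_phi_psi_cong[OF assms])
  then show "v \<in> Theta \<phi> \<psi> I X Ups \<longleftrightarrow> w \<in> Theta \<phi> \<psi> I X Ups"
    by (simp add: Theta_def inter_phi_psi_def)
qed

lemma affine_closed_translate_iff:
  assumes "affine_closed S" "b \<in> S" "d \<in> S"
  shows "(\<lambda>i. a i - b i + d i) \<in> S \<longleftrightarrow> a \<in> S"
proof
  assume "(\<lambda>i. a i - b i + d i) \<in> S"
  moreover have "\<forall>c\<in>S. (\<lambda>i. c i - d i + b i) \<in> S"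
    using assms unfolding affine_closed_def by blast
  ultimately show "a \<in> S"
    by force
qed (use assms in \<open>auto simp: affine_closed_def\<close>)

lemma set_psi_translate_inter:
  assumes "\<forall>\<alpha>\<in>I. affine_closed (\<psi> \<alpha>)"
    and "w \<subseteq> set_psi \<psi> I b" "w \<subseteq> set_psi \<psi> I d"
  shows "set_psi \<psi> I (\<lambda>i. a i - b i + d i) \<inter> w = set_psi \<psi> I a \<inter> w"
  using assms affine_closed_translate_iff[of "\<psi> _" b d a]
  unfolding set_psi_def by blast

lemma mem_inter_phi_psi_iff:
  "(w0, w1) \<in> inter_phi_psi \<phi> \<psi> I X v \<longleftrightarrow> w0 \<subseteq> w1 \<and> w1 \<subseteq> I \<and>
     (\<exists>c0\<in>\<phi>. \<exists>c1\<in>\<phi>. (\<forall>i. i \<notin> X \<longrightarrow> c0 i = v i) \<and> (\<forall>i. i \<notin> X \<longrightarrow> c1 i = v i) \<and>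
        w1 \<subseteq> set_psi \<psi> I c1 \<and> set_psi \<psi> I c0 \<inter> w1 = w0)"
  unfolding inter_phi_psi_def Set_phi_psi_def by blast

lemma inter_phi_psi_affine_comb:
  assumes "affine_closed \<phi>" "\<forall>\<alpha>\<in>I. affine_closed (\<psi> \<alpha>)"
    and "p \<in> inter_phi_psi \<phi> \<psi> I X a" "p \<in> inter_phi_psi \<phi> \<psi> I X b"
    and "p \<in> inter_phi_psi \<phi> \<psi> I X d"
  shows "p \<in> inter_phi_psi \<phi> \<psi> I X (\<lambda>i. a i - b i + d i)"
proof -
  obtain w0 w1 where p: "p = (w0, w1)"
    by fastforce
  from assms(3) obtain a0 a1 where w: "w0 \<subseteq> w1" "w1 \<subseteq> I"
      and a_phi: "a0 \<in> \<phi>" "a1 \<in> \<phi>"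
      and a_agree: "\<forall>i. i \<notin> X \<longrightarrow> a0 i = a i" "\<forall>i. i \<notin> X \<longrightarrow> a1 i = a i"
      and a_sets: "w1 \<subseteq> set_psi \<psi> I a1" "set_psi \<psi> I a0 \<inter> w1 = w0"
    unfolding p mem_inter_phi_psi_iff by blast
  from assms(4) obtain b1 where b1: "b1 \<in> \<phi>" "\<forall>i. i \<notin> X \<longrightarrow> b1 i = b i"
      and b_set: "w1 \<subseteq> set_psi \<psi> I b1"
    unfolding p mem_inter_phi_psi_iff by blast
  from assms(5) obtain d1 where d1: "d1 \<in> \<phi>" "\<forall>i. i \<notin> X \<longrightarrow> d1 i = d i"
      and d_set: "w1 \<subseteq> set_psi \<psi> I d1"
    unfolding p mem_inter_phi_psi_iff by blast
  define e0 where "e0 = (\<lambda>i. a0 i - b1 i + d1 i)"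
  define e1 where "e1 = (\<lambda>i. a1 i - b1 i + d1 i)"
  have "e0 \<in> \<phi>" "e1 \<in> \<phi>"
    using assms(1) a_phi b1 d1 unfolding affine_closed_def e0_def e1_def by blast+
  moreover have "\<forall>i. i \<notin> X \<longrightarrow> e0 i = a i - b i + d i" "\<forall>i. i \<notin> X \<longrightarrow> e1 i = a i - b i + d i"
    using a_agree b1 d1 unfolding e0_def e1_def by simp_all
  moreover have "set_psi \<psi> I e0 \<inter> w1 = w0"
    using set_psi_translate_inter[OF assms(2) b_set d_set, of a0] a_sets(2) unfolding e0_def by simp
  moreover have "w1 \<subseteq> set_psi \<psi> I e1"
    using set_psi_translate_inter[OF assms(2) b_set d_set, of a1] a_sets(1) unfolding e1_def by blast
  ultimately show ?thesis
    unfolding p mem_inter_phi_psi_iff using w by blast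
qed

lemma affine_closed_Theta:
  assumes "affine_closed \<phi>" "\<forall>\<alpha>\<in>I. affine_closed (\<psi> \<alpha>)"
  shows "affine_closed (Theta \<phi> \<psi> I X Ups)"
  using inter_phi_psi_affine_comb[OF assms]
  unfolding affine_closed_def Theta_def by blast

theorem proposition2p22:
  fixes Th :: "'c set" and sc :: "'r::ring_1 \<Rightarrow> 'm::ab_group_add \<Rightarrow> 'm"
    and S :: "('v \<Rightarrow> 'm) set"
  assumes "left_module sc"
    and "infinite Th"
    and "aff2 Th sc TYPE('k) S"
  shows "aff1 Th S"
  using assms(3) unfolding aff1_iff_affine_closed
proof (induction rule: aff2.induct)
  case (atomic t1 t2)
  have "less_card (tvars t1 \<union> tvars t2) Th"
    using finite_less_card finite_tvars assms(2) by blast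
  then show ?case
    using depends_on_teval_eq affine_closed_teval_eq[OF assms(1)] by blast
next
  case (conj F Y)
  then show ?case
    using depends_on_Inter affine_closed_Inter by metis
next
  case (ex S X)
  then show ?case
    using depends_on_ex_vars affine_closed_ex_vars by metis
next
  case (theta \<phi> I \<psi> X Y Ups)
  then show ?case
    using depends_on_Theta affine_closed_Theta by metis
qed

end
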